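(* Let $G=(V,E)$ be an infinite, locally finite, connected weighted graph (as described in the context). Assume that there exist a vertex $x_0\in V$ and a constant $C\geq 0$ such that $H(x)\leq C$ for all $x\in V$, where $H$ is the mean curvature function with respect to $x_0$. Let $v_0:V\to(0,\infty)$ be a bounded positive function. Then any bounded positive solution $v(t,x)$ of $$v_t=\Delta \log v \quad \text{on } (0,\infty)\times V$$ with initial data $v(0,\cdot)=v_0$ satisfies $$\sup_{x\in V} v(t,x)\leq \sup_{x\in V} v_0(x)\quad\text{for every } t\geq 0.$$
   Context: $G=(V,E)$ is an infinite, locally finite, connected graph without loops or multiple edges; $x\sim y$ means $x$ and $y$ are joined by an edge. Each edge $x\sim y$ carries a symmetric weight $\mu_{xy}=\mu_{yx}\geq 0$, with $d_x:=\sum_{y\sim x}\mu_{xy}>0$ for every $x\in V$. For $f:V\to\mathbb{R}$ the Laplacian is $\Delta f(x)=\frac{1}{d_x}\sum_{y\sim x}\mu_{xy}(f(y)-f(x))$. Fix $x_0\in V$ and let $r(x)=d(x,x_0)$ be the graph distance to $x_0$. The mean curvature is $H(x)=\Delta r(x)=\frac{d_+(x)-d_-(x)}{d_x}$, where $d_\pm(x)=\sum_{y\sim x,\ r(y)=r(x)\pm 1}\mu_{xy}$. A solution $v(t,x)$ is a function on $[0,\infty)\times V$, differentiable in $t$ for each fixed $x$, satisfying the equation pointwise for $t>0$ (with $\Delta$ acting in the $x$ variable); "bounded" means bounded on $[0,\infty)\times V$. *)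

theory Defs
  imports "HOL-Analysis.Analysis"
begin

text \<open>A weighted graph on the vertex type 'a: adjacency relation E (x \<sim> y) and edge
weights mu.  The vertex set V is the whole type 'a.\<close>

definition weighted_graph :: "('a \<Rightarrow> 'a \<Rightarrow> bool) \<Rightarrow> ('a \<Rightarrow> 'a \<Rightarrow> real) \<Rightarrow> bool" where
  "weighted_graph E mu \<longleftrightarrow>
     infinite (UNIV :: 'a set) \<and>
     (\<forall>x. \<not> E x x) \<and>
     (\<forall>x y. E x y \<longrightarrow> E y x) \<and>
     (\<forall>x. finite {y. E x y}) \<and>
     (\<forall>x y. E\<^sup>*\<^sup>* x y) \<and>
     (\<forall>x y. E x y \<longrightarrow> mu x y = mu y x \<and> mu x y \<ge> 0) \<and>
     (\<forall>x. (\<Sum>y\<in>{y. E x y}. mu x y) > 0)"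

definition wdeg :: "('a \<Rightarrow> 'a \<Rightarrow> bool) \<Rightarrow> ('a \<Rightarrow> 'a \<Rightarrow> real) \<Rightarrow> 'a \<Rightarrow> real" where
  "wdeg E mu x = (\<Sum>y\<in>{y. E x y}. mu x y)"

definition glaplacian :: "('a \<Rightarrow> 'a \<Rightarrow> bool) \<Rightarrow> ('a \<Rightarrow> 'a \<Rightarrow> real) \<Rightarrow> ('a \<Rightarrow> real) \<Rightarrow> 'a \<Rightarrow> real" where
  "glaplacian E mu f x = (1 / wdeg E mu x) * (\<Sum>y\<in>{y. E x y}. mu x y * (f y - f x))"

definition gdist :: "('a \<Rightarrow> 'a \<Rightarrow> bool) \<Rightarrow> 'a \<Rightarrow> 'a \<Rightarrow> nat" where
  "gdist E x y = (LEAST n. (E ^^ n) x y)"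

definition mean_curv :: "('a \<Rightarrow> 'a \<Rightarrow> bool) \<Rightarrow> ('a \<Rightarrow> 'a \<Rightarrow> real) \<Rightarrow> 'a \<Rightarrow> 'a \<Rightarrow> real" where
  "mean_curv E mu x0 x = glaplacian E mu (\<lambda>z. real (gdist E z x0)) x"

end

theory Submission
  imports Defs
begin

text \<open>A penalized maximum principle. Let \<open>M = sup v\<^sub>0\<close>, \<open>r = d(\<cdot>, x\<^sub>0)\<close>, \<open>K = C/M + 1\<close> and,
  for \<open>\<epsilon> > 0\<close>, \<open>\<phi> = v - \<epsilon>(r + Kt + 1)\<close>. As \<open>v\<close> is bounded, \<open>\<phi> \<ge> M\<close> can only happen on a
  finite ball, so if \<open>\<phi>\<close> ever exceeds \<open>M\<close> there is a first time \<open>t\<^sub>s > 0\<close> at which it reaches \<open>M\<close>,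
  at some vertex \<open>z\<close>. Then \<open>\<phi>(t\<^sub>s, \<cdot>)\<close> is maximal at \<open>z\<close>, and \<open>ln a - ln b \<le> (a - b)/b\<close> gives
  \<open>\<Delta> log v(t\<^sub>s, z) \<le> \<epsilon> H(z) / v(t\<^sub>s, z) \<le> \<epsilon>C/M\<close>, so \<open>\<partial>\<^sub>t\<phi>(t\<^sub>s, z) \<le> -\<epsilon> < 0\<close>, contradicting
  the fact that \<open>\<phi>(\<cdot>, z)\<close> increases to \<open>M\<close> at \<open>t\<^sub>s\<close>. Letting \<open>\<epsilon> \<rightarrow> 0\<close> gives \<open>v \<le> M\<close>.\<close>

lemma finite_relpowp_predecessors:
  assumes sym: "\<And>x y. E x y \<Longrightarrow> E y x" and fin: "\<And>x. finite {y. E x y}"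
  shows "finite {x. (E ^^ n) x z}"
proof (induction n arbitrary: z)
  case 0
  then show ?case by simp
next
  case (Suc n)
  have "{x. (E ^^ Suc n) x z} \<subseteq> (\<Union>y\<in>{y. E z y}. {x. (E ^^ n) x y})"
    using sym by auto
  moreover have "finite (\<Union>y\<in>{y. E z y}. {x. (E ^^ n) x y})"
    using fin Suc by auto
  ultimately show ?case by (rule finite_subset)
qed

lemma finite_gdist_le:
  assumes sym: "\<And>x y. E x y \<Longrightarrow> E y x" and fin: "\<And>x. finite {y. E x y}"
    and conn: "\<And>x y. E\<^sup>*\<^sup>* x y"
  shows "finite {x. gdist E x z \<le> N}"
proof -
  have "{x. gdist E x z \<le> N} \<subseteq> (\<Union>n\<in>{..N}. {x. (E ^^ n) x z})"
  proof
    fix x assume "x \<in> {x. gdist E x z \<le> N}"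
    moreover have "\<exists>n. (E ^^ n) x z" using conn rtranclp_power by metis
    then have "(E ^^ gdist E x z) x z" unfolding gdist_def by (rule LeastI_ex)
    ultimately show "x \<in> (\<Union>n\<in>{..N}. {x. (E ^^ n) x z})" by auto
  qed
  then show ?thesis
    using finite_relpowp_predecessors[OF sym fin] by (meson finite_UN_I finite_atMost finite_subset)
qed

lemma glaplacian_le_of_increments_le:
  assumes mu_nonneg: "\<And>y. E x y \<Longrightarrow> 0 \<le> mu x y"
    and incr: "\<And>y. E x y \<Longrightarrow> f y - f x \<le> c * (g y - g x)"
  shows "glaplacian E mu f x \<le> c * glaplacian E mu g x"
proof -
  have "0 \<le> 1 / wdeg E mu x"
    unfolding wdeg_def using mu_nonneg by (intro divide_nonneg_nonneg sum_nonneg) auto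
  moreover have "(\<Sum>y\<in>{y. E x y}. mu x y * (f y - f x)) \<le> (\<Sum>y\<in>{y. E x y}. mu x y * (c * (g y - g x)))"
    using mu_nonneg incr by (intro sum_mono mult_left_mono) auto
  ultimately have "glaplacian E mu f x \<le> 1 / wdeg E mu x * (\<Sum>y\<in>{y. E x y}. mu x y * (c * (g y - g x)))"
    unfolding glaplacian_def by (rule mult_left_mono[rotated])
  also have "\<dots> = c * glaplacian E mu g x"
    unfolding glaplacian_def by (simp add: sum_distrib_left algebra_simps)
  finally show ?thesis .

qed

lemma glaplacian_ln_le_at_max:
  assumes mu_nonneg: "\<And>y. E z y \<Longrightarrow> 0 \<le> mu z y"
    and pos: "\<And>y. 0 < u y"
    and max: "\<And>y. E z y \<Longrightarrow> u y - c * g y \<le> u z - c * g z"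
  shows "glaplacian E mu (\<lambda>y. ln (u y)) z \<le> c / u z * glaplacian E mu g z"
proof (rule glaplacian_le_of_increments_le)
  show "\<And>y. E z y \<Longrightarrow> 0 \<le> mu z y" by (rule mu_nonneg)
next
  fix y assume "E z y"
  have "ln (u y) - ln (u z) = ln (u y / u z)"
    using pos[of y] pos[of z] by (simp add: ln_div)
  also have "\<dots> \<le> u y / u z - 1"
    using pos by (intro ln_le_minus_one) auto
  also have "\<dots> = (u y - u z) / u z"
    using pos[of z] by (simp add: field_simps)
  also have "\<dots> \<le> c * (g y - g z) / u z"
    using max[OF \<open>E z y\<close>] pos[of z] by (intro divide_right_mono) (auto simp: algebra_simps)
  finally show "ln (u y) - ln (u z) \<le> c / u z * (g y - g z)" by simp
qed

lemma deriv_nonneg_at_left_max: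
  fixes f :: "real \<Rightarrow> real"
  assumes der: "(f has_real_derivative D) (at t)" and "a < t"
    and max: "\<And>s. a \<le> s \<Longrightarrow> s \<le> t \<Longrightarrow> f s \<le> f t"
  shows "0 \<le> D"
proof (rule ccontr)
  assume "\<not> 0 \<le> D"
  then obtain d where "0 < d" and dec: "\<And>h. 0 < h \<Longrightarrow> h < d \<Longrightarrow> f t < f (t - h)"
    using DERIV_neg_dec_left[OF der] by force
  define h where "h = min d (t - a) / 2"
  have "0 < h" "h < d" "a \<le> t - h"
    using \<open>0 < d\<close> \<open>a < t\<close> unfolding h_def by (auto simp: min_def field_simps)
  then show False using dec max[of "t - h"] by fastforce
qed

lemma first_crossing_time:
  fixes f :: "'b \<Rightarrow> real \<Rightarrow> real"
  assumes "finite F"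
    and cont: "\<And>y. y \<in> F \<Longrightarrow> continuous_on {0..} (f y)"
    and start: "\<And>y. y \<in> F \<Longrightarrow> f y 0 < M"
    and cross: "x \<in> F" "0 \<le> t" "M < f x t"
  obtains ts z where "0 < ts" "z \<in> F" "f z ts = M"
    "\<And>y s. y \<in> F \<Longrightarrow> 0 \<le> s \<Longrightarrow> s \<le> ts \<Longrightarrow> f y s \<le> M"
proof -
  define S where "S = (\<Union>y\<in>F. {s \<in> {0..t}. M \<le> f y s})"
  have cont_t: "continuous_on {0..r} (f y)" if "y \<in> F" for y r
    using cont[OF that] by (rule continuous_on_subset) auto
  have "closed S"
    unfolding S_def using \<open>finite F\<close> cont_t
    by (intro closed_UN ballI continuous_on_closed_Collect_le continuous_on_const) auto
  moreover have "t \<in> S"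
    using cross unfolding S_def by force
  moreover have "bdd_below S"
    unfolding S_def by (auto intro!: bdd_belowI[of _ 0])
  ultimately have "Inf S \<in> S"
    by (intro closed_contains_Inf) auto
  define ts where "ts = Inf S"
  then obtain z where z: "z \<in> F" "0 \<le> ts" "ts \<le> t" "M \<le> f z ts"
    using \<open>Inf S \<in> S\<close> unfolding S_def by auto
  have below: "f y s < M" if "y \<in> F" "0 \<le> s" "s < ts" for y s
  proof (rule ccontr)
    assume "\<not> f y s < M"
    then have "s \<in> S" unfolding S_def using that z by (intro UN_I[of y]) auto
    then show False
      using cInf_lower[OF _ \<open>bdd_below S\<close>] that unfolding ts_def by force
  qed
  have "ts \<noteq> 0" using z start by force
  with z have "0 < ts" by simp
  have at_ts: "f y ts \<le> M" if y: "y \<in> F" for y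
  proof (rule ccontr)
    assume "\<not> f y ts \<le> M"
    then obtain s where "0 \<le> s" "s \<le> ts" "f y s = M"
      using IVT'[of "f y" 0 M ts] start[OF y] cont_t[OF y] \<open>0 < ts\<close> by force
    moreover have "s \<noteq> ts" using \<open>\<not> f y ts \<le> M\<close> \<open>f y s = M\<close> by auto
    ultimately show False using below[OF y, of s] by simp
  qed
  show thesis
  proof
    show "f z ts = M" using at_ts z by force
    show "f y s \<le> M" if "y \<in> F" "0 \<le> s" "s \<le> ts" for y s
      using that below at_ts by (cases "s = ts") force+
  qed (use \<open>0 < ts\<close> z in auto)
qed

locale log_diffusion =
  fixes E :: "'a \<Rightarrow> 'a \<Rightarrow> bool" and mu :: "'a \<Rightarrow> 'a \<Rightarrow> real"
    and x0 :: 'a and C :: real and v :: "real \<Rightarrow> 'a \<Rightarrow> real"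
  assumes sym: "\<And>x y. E x y \<Longrightarrow> E y x"
    and locally_finite: "\<And>x. finite {y. E x y}"
    and connected: "\<And>x y. E\<^sup>*\<^sup>* x y"
    and mu_nonneg: "\<And>x y. E x y \<Longrightarrow> 0 \<le> mu x y"
    and C_nonneg: "0 \<le> C"
    and curvature_bound: "\<And>x. mean_curv E mu x0 x \<le> C"
    and pos: "\<And>t x. 0 \<le> t \<Longrightarrow> 0 < v t x"
    and bounded: "\<exists>B. \<forall>t\<ge>0. \<forall>x. \<bar>v t x\<bar> \<le> B"
    and cont: "\<And>x. continuous_on {0..} (\<lambda>s. v s x)"
    and equation: "\<And>t x. 0 < t \<Longrightarrow>
      ((\<lambda>s. v s x) has_real_derivative glaplacian E mu (\<lambda>y. ln (v t y)) x) (at t)"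
begin

lemma finite_distance_not_dominating:
  assumes "0 < e"
  shows "finite {y. \<exists>s\<ge>0. e * real (gdist E y x0) \<le> v s y}"
proof -
  obtain B where B: "\<And>s y. 0 \<le> s \<Longrightarrow> v s y \<le> B"
    using bounded by (meson abs_le_D1)
  have "{y. \<exists>s\<ge>0. e * real (gdist E y x0) \<le> v s y} \<subseteq> {y. gdist E y x0 \<le> nat \<lceil>B / e\<rceil>}"
  proof safe
    fix y s assume "0 \<le> s" "e * real (gdist E y x0) \<le> v s y"
    then have "real (gdist E y x0) \<le> B / e"
      using B[of s y] \<open>0 < e\<close> by (simp add: field_simps)
    then show "gdist E y x0 \<le> nat \<lceil>B / e\<rceil>"
      by (simp add: le_nat_iff) (metis ceiling_mono ceiling_of_nat)
  qed
  then show ?thesis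
    using finite_gdist_le[OF sym locally_finite connected] finite_subset by blast
qed

lemma glaplacian_ln_le_at_penalized_max:
  assumes "0 \<le> t" "0 < e" "0 < M" "M \<le> v t z"
    and max: "\<And>y. v t y - e * real (gdist E y x0) \<le> v t z - e * real (gdist E z x0)"
  shows "glaplacian E mu (\<lambda>y. ln (v t y)) z \<le> e * C / M"
proof -
  have "glaplacian E mu (\<lambda>y. ln (v t y)) z \<le> e / v t z * mean_curv E mu x0 z"
    unfolding mean_curv_def using max \<open>0 \<le> t\<close> by (intro glaplacian_ln_le_at_max mu_nonneg pos)
  also have "\<dots> \<le> e / v t z * C"
    using curvature_bound[of z] \<open>0 < e\<close> pos[OF \<open>0 \<le> t\<close>, of z] by (intro mult_left_mono) auto
  also have "\<dots> \<le> e / M * C"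
    using C_nonneg \<open>0 < e\<close> \<open>0 < M\<close> \<open>M \<le> v t z\<close> by (intro mult_right_mono divide_left_mono) auto
  finally show ?thesis by simp
qed

lemma penalized_bound:
  assumes init: "\<And>y. v 0 y \<le> M" and "0 < e" "0 \<le> t"
  shows "v t x \<le> M + e * (real (gdist E x x0) + (C / M + 1) * t + 1)"
proof (rule ccontr)
  have "0 < M" using init[of x] pos[of 0 x] by simp
  define r where "r y = real (gdist E y x0)" for y
  define K where "K = C / M + 1"
  define \<phi> where "\<phi> y s = v s y - e * (r y + K * s + 1)" for y s
  have "0 < K" unfolding K_def using C_nonneg \<open>0 < M\<close> by (simp add: add_nonneg_pos)
  define F where "F = {y. \<exists>s\<ge>0. e * r y \<le> v s y}"
  have "finite F"
    unfolding F_def r_def using finite_distance_not_dominating[OF \<open>0 < e\<close>] .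
  have outside: "\<phi> y s < M" if "y \<notin> F" "0 \<le> s" for y s
  proof -
    have "0 < e * (K * s + 1)" using \<open>0 < e\<close> \<open>0 < K\<close> that by (simp add: add_nonneg_pos)
    then show ?thesis using that \<open>0 < M\<close> unfolding F_def \<phi>_def by (auto simp: algebra_simps)
  qed
  assume "\<not> v t x \<le> M + e * (real (gdist E x x0) + (C / M + 1) * t + 1)"
  then have "M < \<phi> x t" unfolding \<phi>_def r_def K_def by simp
  with outside \<open>0 \<le> t\<close> have "x \<in> F" by force
  have start: "\<phi> y 0 < M" for y
  proof -
    have "0 < e * (r y + 1)" using \<open>0 < e\<close> unfolding r_def by simp
    then show ?thesis using init[of y] unfolding \<phi>_def by simp
  qed
  have "continuous_on {0..} (\<phi> y)" for y
    unfolding \<phi>_def by (intro continuous_intros cont)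
  with start obtain ts z where "0 < ts" "z \<in> F" "\<phi> z ts = M"
    and le_M: "\<And>y s. y \<in> F \<Longrightarrow> 0 \<le> s \<Longrightarrow> s \<le> ts \<Longrightarrow> \<phi> y s \<le> M"
    using first_crossing_time[of F \<phi> M x t] \<open>finite F\<close> \<open>x \<in> F\<close> \<open>0 \<le> t\<close> \<open>M < \<phi> x t\<close> by blast
  have spatial_max: "\<phi> y ts \<le> \<phi> z ts" for y
    using le_M[of y ts] outside[of y ts] \<open>0 < ts\<close> \<open>\<phi> z ts = M\<close> by (cases "y \<in> F") auto
  have "0 \<le> e * (r z + K * ts + 1)"
    using \<open>0 < e\<close> \<open>0 < K\<close> \<open>0 < ts\<close> unfolding r_def by simp
  then have "M \<le> v ts z"
    using \<open>\<phi> z ts = M\<close> unfolding \<phi>_def by simp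
  define L where "L = glaplacian E mu (\<lambda>y. ln (v ts y)) z"
  have "(\<phi> z has_real_derivative L - e * K) (at ts)"
    unfolding \<phi>_def L_def using equation[OF \<open>0 < ts\<close>]
    by (auto intro!: derivative_eq_intros)
  then have "0 \<le> L - e * K"
    by (rule deriv_nonneg_at_left_max[OF _ \<open>0 < ts\<close>]) (use le_M[OF \<open>z \<in> F\<close>] \<open>\<phi> z ts = M\<close> in auto)
  moreover have "L \<le> e * C / M"
    unfolding L_def using \<open>0 < ts\<close> \<open>0 < e\<close> \<open>0 < M\<close> \<open>M \<le> v ts z\<close> spatial_max
    by (intro glaplacian_ln_le_at_penalized_max) (auto simp: \<phi>_def r_def algebra_simps)
  moreover have "e * K = e * C / M + e"
    unfolding K_def by (simp add: algebra_simps)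
  ultimately show False using \<open>0 < e\<close> by linarith
qed

lemma bounded_by_initial_bound:
  assumes init: "\<And>y. v 0 y \<le> M" and "0 \<le> t"
  shows "v t x \<le> M"
proof (rule field_le_epsilon)
  fix e :: real assume "0 < e"
  define A where "A = real (gdist E x x0) + (C / M + 1) * t + 1"
  have "0 < M" using init[of x] pos[of 0 x] by simp
  then have "0 < A" unfolding A_def using C_nonneg \<open>0 \<le> t\<close> by (simp add: add_nonneg_pos)
  then show "v t x \<le> M + e"
    using penalized_bound[OF init, of "e / A" t x] \<open>0 < e\<close> \<open>0 \<le> t\<close> unfolding A_def by simp
qed

end

theorem theorem2:
  fixes E :: "'a \<Rightarrow> 'a \<Rightarrow> bool" and mu :: "'a \<Rightarrow> 'a \<Rightarrow> real"
    and x0 :: 'a and C :: real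
    and v0 :: "'a \<Rightarrow> real" and v :: "real \<Rightarrow> 'a \<Rightarrow> real"
  assumes G: "weighted_graph E mu"
    and C: "C \<ge> 0" "\<forall>x. mean_curv E mu x0 x \<le> C"
    and v0_pos: "\<forall>x. v0 x > 0" and v0_bdd: "\<exists>B. \<forall>x. v0 x \<le> B"
    and v_diff: "\<forall>x. \<forall>t\<ge>0. (\<lambda>s. v s x) differentiable (at t within {0..})"
    and v_eq: "\<forall>x. \<forall>t>0. ((\<lambda>s. v s x) has_real_derivative
                   glaplacian E mu (\<lambda>y. ln (v t y)) x) (at t)"
    and v_pos: "\<forall>t\<ge>0. \<forall>x. v t x > 0"
    and v_bdd: "\<exists>B. \<forall>t\<ge>0. \<forall>x. \<bar>v t x\<bar> \<le> B"
    and v_init: "\<forall>x. v 0 x = v0 x"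
  shows "\<forall>t\<ge>0. (SUP x. v t x) \<le> (SUP x. v0 x)"
proof -
  have "continuous_on {0..} (\<lambda>s. v s x)" for x
    using v_diff by (auto simp: continuous_on_eq_continuous_within differentiable_imp_continuous_within)
  then interpret log_diffusion E mu x0 C v
    using G C v_eq v_pos v_bdd unfolding weighted_graph_def by unfold_locales auto
  have "bdd_above (range v0)" using v0_bdd by (auto simp: bdd_above_def)
  then have "v 0 y \<le> (SUP x. v0 x)" for y
    using v_init by (simp add: cSUP_upper)
  then show ?thesis
    using bounded_by_initial_bound by (auto intro: cSUP_least)
qed

end
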